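(* Let $C\subseteq\mathbb{F}_2^n$ be a binary linear $[n,k,d]$ code with $\mathbf{1}_n\in C$, whose dual $C^\perp$ has minimum distance $d^\perp$, let $t$ be a positive integer with $$d^\perp-t=\#\{u \mid C_u\neq\emptyset,\ 0<u\le n-t\}=3,$$ and suppose the nonzero weights of $C$ are exactly $d,\ n/2,\ n-d,\ n$ (with $n$ even). If $d^\perp\ge 8$, then $$n^2-(4d+3)n+4d^2+8=0.$$
   Context: $\mathbf{1}_n$ is the all-ones vector; $C^\perp$ is the dual code with respect to the standard inner product; $d^\perp$ is the minimum nonzero weight of $C^\perp$; $C_u=\{c\in C:\mathrm{wt}(c)=u\}$ (Hamming weight). The paper notes that in the case $d^\perp-t=3$ the weight distribution of $C$ is supported on $0,d,n/2,n-d,n$ with $n$ even, and works under this assumption throughout. *)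

theory Defs
  imports Main
begin

text \<open>Vectors of F_2^n are represented by their supports, i.e. subsets of {..<n}.
  Vector addition is symmetric difference, the Hamming weight is the cardinality,
  the all-ones vector is {..<n}, and the standard inner product of x and y is
  the parity of card (x \<inter> y).\<close>

definition vadd :: "nat set \<Rightarrow> nat set \<Rightarrow> nat set" where
  "vadd x y = (x - y) \<union> (y - x)"

definition binary_linear_code :: "nat \<Rightarrow> nat \<Rightarrow> nat set set \<Rightarrow> bool" where
  "binary_linear_code n k C \<longleftrightarrow>
     C \<subseteq> Pow {..<n} \<and> {} \<in> C \<and> (\<forall>x\<in>C. \<forall>y\<in>C. vadd x y \<in> C) \<and> card C = 2 ^ k"

definition dual_code :: "nat \<Rightarrow> nat set set \<Rightarrow> nat set set" where
  "dual_code n C = {y. y \<subseteq> {..<n} \<and> (\<forall>x\<in>C. even (card (x \<inter> y)))}"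

definition min_distance :: "nat set set \<Rightarrow> nat \<Rightarrow> bool" where
  "min_distance C d \<longleftrightarrow>
     (\<exists>c\<in>C. c \<noteq> {} \<and> card c = d) \<and> (\<forall>c\<in>C. c \<noteq> {} \<longrightarrow> d \<le> card c)"

definition weight_class :: "nat set set \<Rightarrow> nat \<Rightarrow> nat set set" where
  "weight_class C u = {c\<in>C. card c = u}"

end

theory Submission
  imports Defs
begin

text \<open>Pless power moments. Writing \<open>n - 2 wt c\<close> as \<open>\<Sum>i<n. (-1)^c\<^sub>i\<close> and expanding its
  \<open>j\<close>-th power turns \<open>\<Sum>c\<in>C. (n - 2 wt c)^j\<close> into a sum, over all lists of \<open>j\<close> coordinates, of
  character sums over \<open>C\<close>. Such a character sum vanishes unless the set of coordinates occurring
  an odd number of times lies in the dual code; when the dual distance exceeds \<open>j\<close> this set must be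
  empty, so the \<open>j\<close>-th moment of \<open>C\<close> is \<open>|C|/2^n\<close> times that of the whole space \<open>F\<^sub>2^n\<close>. The latter
  are \<open>2^n n\<close>, \<open>2^n (3n^2 - 2n)\<close> and \<open>2^n (15n^3 - 30n^2 + 16n)\<close> for \<open>j = 2, 4, 6\<close>. With weights
  \<open>0, d, n/2, n - d, n\<close> the square \<open>x = (n - 2 wt c)^2\<close> is a root of \<open>x (x - n^2) (x - (n - 2d)^2)\<close>,
  and summing this over \<open>C\<close> by means of the moments gives
  \<open>n (n - 1) (n - 2) ((n - 2d)^2 - 3n + 8) = 0\<close>.\<close>

lemma card_vadd:
  assumes "finite A" "finite B"
  shows "card (vadd A B) + 2 * card (A \<inter> B) = card A + card B"
proof -
  have "card (vadd A B) = card (A - B) + card (B - A)"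
    unfolding vadd_def by (rule card_Un_disjoint) (use assms in auto)
  then show ?thesis
    using card_Int_Diff[OF assms(1), of B] card_Int_Diff[OF assms(2), of A] by (simp add: Int_commute)
qed

lemma vadd_vadd_cancel: "vadd a (vadd a c) = c"
  unfolding vadd_def by auto

lemma neg_one_power_card_Int_vadd:
  assumes "finite c"
  shows "(-1::int) ^ card (c \<inter> vadd x y) = (-1) ^ card (c \<inter> x) * (-1) ^ card (c \<inter> y)"
proof -
  have "c \<inter> vadd x y = vadd (c \<inter> x) (c \<inter> y)"
    by (auto simp: vadd_def)
  then have "card (c \<inter> vadd x y) + 2 * card (c \<inter> x \<inter> y) = card (c \<inter> x) + card (c \<inter> y)"
    using card_vadd[of "c \<inter> x" "c \<inter> y"] assms by (simp add: Int_ac)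
  then have "(-1::int) ^ card (c \<inter> vadd x y) * ((-1) ^ 2) ^ card (c \<inter> x \<inter> y)
      = (-1) ^ card (c \<inter> x) * (-1) ^ card (c \<inter> y)"
    by (metis power_add power_mult)
  then show ?thesis by simp
qed

lemma sum_neg_one_power_card_Int_eq_0:
  assumes "finite C" and closed: "\<forall>x\<in>C. \<forall>y\<in>C. vadd x y \<in> C"
    and "finite S" and "c0 \<in> C" and odd: "odd (card (S \<inter> c0))"
  shows "(\<Sum>c\<in>C. (-1::int) ^ card (S \<inter> c)) = 0"
proof -
  have "bij_betw (vadd c0) C C"
    by (rule bij_betw_byWitness[where f' = "vadd c0"]) (use closed \<open>c0 \<in> C\<close> vadd_vadd_cancel in auto)
  then have "(\<Sum>c\<in>C. (-1::int) ^ card (S \<inter> c)) = (\<Sum>c\<in>C. (-1) ^ card (S \<inter> vadd c0 c))"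
    by (rule sum.reindex_bij_betw[symmetric])
  also have "\<dots> = - (\<Sum>c\<in>C. (-1) ^ card (S \<inter> c))"
    using odd by (simp add: neg_one_power_card_Int_vadd[OF \<open>finite S\<close>] sum_negf)
  finally show ?thesis by simp
qed

definition sign_at :: "nat set \<Rightarrow> nat \<Rightarrow> int" where
  "sign_at c i = (if i \<in> c then -1 else 1)"

definition odd_occurrences :: "'a list \<Rightarrow> 'a set" where
  "odd_occurrences xs = {i. odd (count_list xs i)}"

lemma odd_occurrences_Cons: "odd_occurrences (i # xs) = vadd {i} (odd_occurrences xs)"
  by (auto simp: odd_occurrences_def vadd_def)

lemma odd_occurrences_subset: "odd_occurrences xs \<subseteq> set xs"
  unfolding odd_occurrences_def by (metis (mono_tags) count_list_0_iff even_zero mem_Collect_eq subsetI)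

lemma card_odd_occurrences_le: "card (odd_occurrences xs) \<le> length xs"
  using card_mono[OF finite_set odd_occurrences_subset] card_length by (rule le_trans)

lemma prod_list_sign_at:
  assumes "finite c"
  shows "prod_list (map (sign_at c) xs) = (-1) ^ card (c \<inter> odd_occurrences xs)"
proof (induction xs)
  case Nil
  show ?case by (simp add: odd_occurrences_def)
next
  case (Cons i xs)
  have "sign_at c i = (-1) ^ card (c \<inter> {i})"
    by (simp add: sign_at_def)
  with Cons show ?case
    by (simp add: odd_occurrences_Cons neg_one_power_card_Int_vadd[OF assms])
qed

lemma sum_sign_at:
  assumes "c \<subseteq> {..<n}"
  shows "(\<Sum>i<n. sign_at c i) = int n - 2 * int (card c)"
proof -
  have "(\<Sum>i<n. sign_at c i) = (\<Sum>i\<in>{..<n} - c. sign_at c i) + (\<Sum>i\<in>c. sign_at c i)"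
    by (rule sum.subset_diff[OF assms]) simp
  also have "\<dots> = (\<Sum>i\<in>{..<n} - c. 1) + (\<Sum>i\<in>c. -1)"
    by (intro arg_cong2[where f = "(+)"] sum.cong) (auto simp: sign_at_def)
  also have "\<dots> = int n - 2 * int (card c)"
    using assms card_mono[OF _ assms] by (simp add: card_Diff_subset finite_subset)
  finally show ?thesis .
qed

lemma power_sum_eq_sum_lists:
  fixes f :: "'a \<Rightarrow> 'b::comm_semiring_1"
  shows "(\<Sum>i\<in>A. f i) ^ j = (\<Sum>xs\<in>{xs. set xs \<subseteq> A \<and> length xs = j}. prod_list (map f xs))"
proof (induction j)
  case 0
  have "{xs. set xs \<subseteq> A \<and> length xs = 0} = {[]}" by auto
  then show ?case by simp
next
  case (Suc j)
  let ?L = "{xs. set xs \<subseteq> A \<and> length xs = j}"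
  have inj: "inj_on (\<lambda>(xs, i). i # xs) (?L \<times> A)" by (auto simp: inj_on_def)
  have "(\<Sum>xs\<in>{xs. set xs \<subseteq> A \<and> length xs = Suc j}. prod_list (map f xs))
     = (\<Sum>(xs, i)\<in>?L \<times> A. f i * prod_list (map f xs))"
    unfolding lists_length_Suc_eq by (subst sum.reindex[OF inj]) (auto intro!: sum.cong)
  also have "\<dots> = (\<Sum>i\<in>A. f i) * (\<Sum>i\<in>A. f i) ^ j"
    by (simp add: sum.cartesian_product[symmetric] Suc sum_distrib_left sum_distrib_right)
  finally show ?case by simp
qed

lemma binary_linear_codeD:
  assumes "binary_linear_code n k C"
  shows "finite C" and "card C = 2 ^ k" and "\<forall>x\<in>C. \<forall>y\<in>C. vadd x y \<in> C"
    and "C \<subseteq> Pow {..<n}" and "c \<in> C \<Longrightarrow> finite c"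
proof -
  show sub: "C \<subseteq> Pow {..<n}"
    using assms by (simp add: binary_linear_code_def)
  then show "finite C" "c \<in> C \<Longrightarrow> finite c"
    by (auto dest: finite_subset[OF _ finite_lessThan] intro: finite_subset[OF _ finite_Pow_iff[THEN iffD2]])
  show "card C = 2 ^ k" "\<forall>x\<in>C. \<forall>y\<in>C. vadd x y \<in> C"
    using assms by (simp_all add: binary_linear_code_def)
qed

lemma sum_character_code:
  assumes code: "binary_linear_code n k C"
    and dual: "\<forall>y\<in>dual_code n C. y \<noteq> {} \<longrightarrow> j < card y"
    and xs: "set xs \<subseteq> {..<n}" "length xs \<le> j"
  shows "(\<Sum>c\<in>C. prod_list (map (sign_at c) xs)) = (if odd_occurrences xs = {} then 2 ^ k else 0)"
proof -
  let ?S = "odd_occurrences xs"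
  have S: "?S \<subseteq> {..<n}" "card ?S \<le> j" "finite ?S"
    using odd_occurrences_subset[of xs] card_odd_occurrences_le[of xs] xs
    by (auto intro: finite_subset)
  have "(\<Sum>c\<in>C. prod_list (map (sign_at c) xs)) = (\<Sum>c\<in>C. (-1) ^ card (?S \<inter> c))"
    using binary_linear_codeD(5)[OF code] by (simp add: prod_list_sign_at Int_commute)
  also have "\<dots> = (if ?S = {} then 2 ^ k else 0)"
  proof (cases "?S = {}")
    case True
    then show ?thesis
      by (simp add: binary_linear_codeD(2)[OF code])
  next
    case False
    then have "?S \<notin> dual_code n C"
      using dual S(2) by (meson not_le)
    then obtain c0 where "c0 \<in> C" "odd (card (?S \<inter> c0))"
      using S(1) by (auto simp: dual_code_def Int_commute)
    with False show ?thesis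
      using sum_neg_one_power_card_Int_eq_0[OF binary_linear_codeD(1,3)[OF code] S(3)] by simp
  qed
  finally show ?thesis .
qed

definition power_moment :: "nat \<Rightarrow> nat set set \<Rightarrow> nat \<Rightarrow> int" where
  "power_moment n C j = (\<Sum>c\<in>C. (int n - 2 * int (card c)) ^ j)"

lemma power_moment_code_even_lists:
  assumes code: "binary_linear_code n k C"
    and dual: "\<forall>y\<in>dual_code n C. y \<noteq> {} \<longrightarrow> j < card y"
  shows "power_moment n C j
    = 2 ^ k * int (card {xs. set xs \<subseteq> {..<n} \<and> length xs = j \<and> odd_occurrences xs = {}})"
proof -
  let ?L = "{xs. set xs \<subseteq> {..<n} \<and> length xs = j}"
  have "power_moment n C j = (\<Sum>c\<in>C. \<Sum>xs\<in>?L. prod_list (map (sign_at c) xs))"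
    unfolding power_moment_def
  proof (intro sum.cong refl)
    fix c assume "c \<in> C"
    then have "c \<subseteq> {..<n}"
      using binary_linear_codeD(4)[OF code] by auto
    then have "int n - 2 * int (card c) = (\<Sum>i<n. sign_at c i)"
      by (simp add: sum_sign_at)
    then show "(int n - 2 * int (card c)) ^ j = (\<Sum>xs\<in>?L. prod_list (map (sign_at c) xs))"
      by (simp only: power_sum_eq_sum_lists lessThan_def)
  qed
  also have "\<dots> = (\<Sum>xs\<in>?L. \<Sum>c\<in>C. prod_list (map (sign_at c) xs))"
    by (rule sum.swap)
  also have "\<dots> = (\<Sum>xs\<in>?L. if odd_occurrences xs = {} then 2 ^ k else 0)"
    by (intro sum.cong refl) (simp add: sum_character_code[OF code dual])
  also have "\<dots> = 2 ^ k * int (card {xs \<in> ?L. odd_occurrences xs = {}})"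
    by (simp add: sum.If_cases finite_lists_length_eq Int_def)
  finally show ?thesis
    by simp
qed

lemma binary_linear_code_Pow: "binary_linear_code n n (Pow {..<n})"
  unfolding binary_linear_code_def vadd_def by (auto simp: card_Pow)

lemma dual_code_Pow: "dual_code n (Pow {..<n}) = {{}}"
proof
  show "dual_code n (Pow {..<n}) \<subseteq> {{}}"
  proof
    fix y assume y: "y \<in> dual_code n (Pow {..<n})"
    have "i \<notin> y" for i
    proof
      assume "i \<in> y"
      then have "{i} \<in> Pow {..<n}"
        using y by (auto simp: dual_code_def)
      with y have "even (card ({i} \<inter> y))"
        by (simp add: dual_code_def)
      with \<open>i \<in> y\<close> show False
        by simp
    qed
    then show "y \<in> {{}}"
      by auto
  qed
  show "{{}} \<subseteq> dual_code n (Pow {..<n})"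
    by (simp add: dual_code_def)
qed

lemma power_moment_code_eq_Pow:
  assumes "binary_linear_code n k C"
    and "\<forall>y\<in>dual_code n C. y \<noteq> {} \<longrightarrow> j < card y"
  shows "2 ^ n * power_moment n C j = 2 ^ k * power_moment n (Pow {..<n}) j"
proof -
  have "power_moment n (Pow {..<n}) j
      = 2 ^ n * int (card {xs. set xs \<subseteq> {..<n} \<and> length xs = j \<and> odd_occurrences xs = {}})"
    by (rule power_moment_code_even_lists[OF binary_linear_code_Pow]) (simp add: dual_code_Pow)
  then show ?thesis
    unfolding power_moment_code_even_lists[OF assms] by simp
qed

lemma power_moment_Pow_Suc:
  "power_moment (Suc n) (Pow {..<Suc n}) j
    = (\<Sum>x\<in>Pow {..<n}. (int n - 2 * int (card x) + 1) ^ j + (int n - 2 * int (card x) - 1) ^ j)"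
proof -
  let ?f = "\<lambda>x. (int (Suc n) - 2 * int (card x)) ^ j"
  have Pow_Suc: "Pow {..<Suc n} = Pow {..<n} \<union> insert n ` Pow {..<n}"
    by (simp add: lessThan_Suc Pow_insert)
  have inj: "inj_on (insert n) (Pow {..<n})"
    by (rule inj_onI) (metis Pow_iff insert_ident lessThan_iff order_less_irrefl subsetD)
  have card_insert: "card (insert n x) = Suc (card x)" if "x \<in> Pow {..<n}" for x
  proof -
    have "finite x" "n \<notin> x"
      using that by (auto intro: finite_subset)
    then show ?thesis
      by simp
  qed
  have "power_moment (Suc n) (Pow {..<Suc n}) j
      = (\<Sum>x\<in>Pow {..<n}. ?f x) + (\<Sum>x\<in>insert n ` Pow {..<n}. ?f x)"
    unfolding power_moment_def Pow_Suc by (rule sum.union_disjoint) auto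
  also have "(\<Sum>x\<in>insert n ` Pow {..<n}. ?f x) = (\<Sum>x\<in>Pow {..<n}. ?f (insert n x))"
    by (rule sum.reindex[OF inj, unfolded comp_def])
  also have "(\<Sum>x\<in>Pow {..<n}. ?f x) + (\<Sum>x\<in>Pow {..<n}. ?f (insert n x))
      = (\<Sum>x\<in>Pow {..<n}. (int n - 2 * int (card x) + 1) ^ j)
      + (\<Sum>x\<in>Pow {..<n}. (int n - 2 * int (card x) - 1) ^ j)"
    by (intro arg_cong2[where f = "(+)"] sum.cong) (simp_all add: card_insert algebra_simps)
  finally show ?thesis
    by (simp add: sum.distrib)
qed

lemma power_moment_Pow_0: "power_moment n (Pow {..<n}) 0 = 2 ^ n"
  by (simp add: power_moment_def card_Pow)

lemma power_moment_Pow_2: "power_moment n (Pow {..<n}) 2 = 2 ^ n * int n"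
proof (induction n)
  case (Suc n)
  have "power_moment (Suc n) (Pow {..<Suc n}) 2
      = (\<Sum>x\<in>Pow {..<n}. 2 * (int n - 2 * int (card x)) ^ 2 + 2)"
    unfolding power_moment_Pow_Suc by (intro sum.cong) (simp_all add: power2_eq_square algebra_simps)
  also have "\<dots> = 2 * power_moment n (Pow {..<n}) 2 + 2 * power_moment n (Pow {..<n}) 0"
    by (simp add: power_moment_def sum.distrib sum_distrib_left)
  finally show ?case
    using Suc by (simp add: power_moment_Pow_0 algebra_simps)
qed (simp add: power_moment_def)

lemma power_moment_Pow_4: "power_moment n (Pow {..<n}) 4 = 2 ^ n * (3 * int n ^ 2 - 2 * int n)"
proof (induction n)
  case (Suc n)
  have "power_moment (Suc n) (Pow {..<Suc n}) 4
      = (\<Sum>x\<in>Pow {..<n}. 2 * (int n - 2 * int (card x)) ^ 4 + 12 * (int n - 2 * int (card x)) ^ 2 + 2)"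
    unfolding power_moment_Pow_Suc
    by (intro sum.cong) (simp_all add: power2_eq_square power4_eq_xxxx algebra_simps)
  also have "\<dots> = 2 * power_moment n (Pow {..<n}) 4 + 12 * power_moment n (Pow {..<n}) 2
      + 2 * power_moment n (Pow {..<n}) 0"
    by (simp add: power_moment_def sum.distrib sum_distrib_left)
  finally show ?case
    using Suc by (simp add: power_moment_Pow_0 power_moment_Pow_2 algebra_simps power2_eq_square)
qed (simp add: power_moment_def)

lemma power_moment_Pow_6:
  "power_moment n (Pow {..<n}) 6 = 2 ^ n * (15 * int n ^ 3 - 30 * int n ^ 2 + 16 * int n)"
proof (induction n)
  case (Suc n)
  have "power_moment (Suc n) (Pow {..<Suc n}) 6
      = (\<Sum>x\<in>Pow {..<n}. 2 * (int n - 2 * int (card x)) ^ 6 + 30 * (int n - 2 * int (card x)) ^ 4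
          + 30 * (int n - 2 * int (card x)) ^ 2 + 2)"
    unfolding power_moment_Pow_Suc by (intro sum.cong) (simp_all add: eval_nat_numeral algebra_simps)
  also have "\<dots> = 2 * power_moment n (Pow {..<n}) 6 + 30 * power_moment n (Pow {..<n}) 4
      + 30 * power_moment n (Pow {..<n}) 2 + 2 * power_moment n (Pow {..<n}) 0"
    by (simp add: power_moment_def sum.distrib sum_distrib_left)
  finally show ?case
    using Suc by (simp add: power_moment_Pow_0 power_moment_Pow_2 power_moment_Pow_4
        power2_eq_square power3_eq_cube algebra_simps)
qed (simp add: power_moment_def)

lemma power_moment_Pow_combination:
  "power_moment n (Pow {..<n}) 6 - (int n ^ 2 + x) * power_moment n (Pow {..<n}) 4
    + int n ^ 2 * x * power_moment n (Pow {..<n}) 2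
   = 2 ^ n * (int n * (int n - 1) * (int n - 2) * (x - 3 * int n + 8))"
  unfolding power_moment_Pow_2 power_moment_Pow_4 power_moment_Pow_6
  by (simp add: algebra_simps power2_eq_square power3_eq_cube)

lemma power_moment_annihilator:
  assumes "\<forall>c\<in>C. (int n - 2 * int (card c)) ^ 2 \<in> {0, a, b}"
  shows "power_moment n C 6 - (a + b) * power_moment n C 4 + a * b * power_moment n C 2 = 0"
proof -
  have "(\<Sum>c\<in>C. (int n - 2 * int (card c)) ^ 6 - (a + b) * (int n - 2 * int (card c)) ^ 4
      + a * b * (int n - 2 * int (card c)) ^ 2) = 0"
  proof (intro sum.neutral ballI)
    fix c assume "c \<in> C"
    define s where "s = int n - 2 * int (card c)"
    have "s ^ 6 - (a + b) * s ^ 4 + a * b * s ^ 2 = s ^ 2 * (s ^ 2 - a) * (s ^ 2 - b)"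
      by (simp add: algebra_simps eval_nat_numeral)
    also have "\<dots> = 0"
      using assms \<open>c \<in> C\<close> by (auto simp: s_def)
    finally show "(int n - 2 * int (card c)) ^ 6 - (a + b) * (int n - 2 * int (card c)) ^ 4
      + a * b * (int n - 2 * int (card c)) ^ 2 = 0"
      by (simp add: s_def)
  qed
  then show ?thesis
    by (simp add: power_moment_def sum.distrib sum_subtractf sum_distrib_left)
qed

lemma square_sign_sum_weight_cases:
  assumes "C \<subseteq> Pow {..<n}" and "even n"
    and wts: "{card c | c. c \<in> C \<and> c \<noteq> {}} = {d, n div 2, n - d, n}"
    and "c \<in> C"
  shows "(int n - 2 * int (card c)) ^ 2 \<in> {0, int n ^ 2, (int n - 2 * int d) ^ 2}"
proof (cases "c = {}")
  case False
  then have "card c \<in> {d, n div 2, n - d, n}"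
    using wts \<open>c \<in> C\<close> by blast
  moreover have "d \<le> n"
  proof -
    have "d \<in> {card c | c. c \<in> C \<and> c \<noteq> {}}"
      using wts by simp
    then obtain c' where "c' \<in> C" "card c' = d"
      by blast
    then show ?thesis
      using assms(1) card_mono[of "{..<n}" c'] by auto
  qed
  ultimately show ?thesis
    using \<open>even n\<close> by (auto simp: power2_eq_square algebra_simps of_nat_diff elim!: evenE)
qed simp

lemma power_moment_Pow_annihilator_code:
  assumes code: "binary_linear_code n k C"
    and dual: "\<forall>y\<in>dual_code n C. y \<noteq> {} \<longrightarrow> 6 < card y"
    and squares: "\<forall>c\<in>C. (int n - 2 * int (card c)) ^ 2 \<in> {0, a, b}"
  shows "power_moment n (Pow {..<n}) 6 - (a + b) * power_moment n (Pow {..<n}) 4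
    + a * b * power_moment n (Pow {..<n}) 2 = 0"
proof -
  have moments: "2 ^ n * power_moment n C j = 2 ^ k * power_moment n (Pow {..<n}) j" if "j \<le> 6" for j
    using dual that by (intro power_moment_code_eq_Pow[OF code]) auto
  \<comment> \<open>stated for atoms \<open>p, q\<close> so that \<open>algebra_simps\<close> keeps each \<open>2^n * power_moment n C j\<close> intact\<close>
  have "2 ^ n * (power_moment n C 6 - p * power_moment n C 4 + q * power_moment n C 2)
      = 2 ^ k * (power_moment n (Pow {..<n}) 6 - p * power_moment n (Pow {..<n}) 4
        + q * power_moment n (Pow {..<n}) 2)" for p q
    using moments[of 2] moments[of 4] moments[of 6] by (simp add: algebra_simps)
  from this[of "a + b" "a * b"] show ?thesis
    using power_moment_annihilator[OF squares] by simp
qed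

lemma min_distance_dual_code_le:
  assumes "min_distance (dual_code n C) dperp"
  shows "dperp \<le> n"
proof -
  obtain y where "y \<in> dual_code n C" "card y = dperp"
    using assms by (auto simp: min_distance_def)
  then show ?thesis
    using card_mono[of "{..<n}" y] by (auto simp: dual_code_def)
qed

theorem proposition4p1:
  fixes n k d dperp t :: nat and C :: "nat set set"
  assumes code: "binary_linear_code n k C"
    and mind: "min_distance C d"
    and ones: "{..<n} \<in> C"
    and dmind: "min_distance (dual_code n C) dperp"
    and tpos: "0 < t"
    and h1: "int dperp - int t = 3"
    and h2: "card {u. weight_class C u \<noteq> {} \<and> 0 < u \<and> u \<le> n - t} = 3"
    and neven: "even n"
    and wts: "{card c | c. c \<in> C \<and> c \<noteq> {}} = {d, n div 2, n - d, n}"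
    and big: "dperp \<ge> 8"
  shows "(int n)^2 - (4 * int d + 3) * int n + 4 * (int d)^2 + 8 = 0"
proof -
  define X where "X = (int n - 2 * int d) ^ 2"
  have "\<forall>c\<in>C. (int n - 2 * int (card c)) ^ 2 \<in> {0, int n ^ 2, X}"
    using square_sign_sum_weight_cases[OF binary_linear_codeD(4)[OF code] neven wts] by (simp add: X_def)
  then have "power_moment n (Pow {..<n}) 6 - (int n ^ 2 + X) * power_moment n (Pow {..<n}) 4
      + int n ^ 2 * X * power_moment n (Pow {..<n}) 2 = 0"
    using dmind big by (intro power_moment_Pow_annihilator_code[OF code]) (auto simp: min_distance_def)
  then have "2 ^ n * (int n * (int n - 1) * (int n - 2) * (X - 3 * int n + 8)) = 0"
    by (simp add: power_moment_Pow_combination)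
  moreover have "8 \<le> n"
    using min_distance_dual_code_le[OF dmind] big by simp
  ultimately have "X - 3 * int n + 8 = 0"
    by simp
  then show ?thesis
    by (simp add: X_def power2_eq_square algebra_simps)
qed

end
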